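(* Let $\lambda\in\mathbb{R}$ and let $\mu$ be a (nonzero, finite, positive) measure on $\mathbb{R}$ with support contained in $(-\infty,\lambda]$. Then $l\mapsto-\frac{1}{s_\mu(l)}$ is convex on $(\lambda,\infty)$, where $s_\mu(l)=\int\frac{1}{l-x}\mu(dx)$. If the support of $\mu$ is not a singleton, this map is strictly convex.
   Context: $s_\mu$ is the Stieltjes transform of $\mu$, defined for $l$ outside the support of $\mu$. *)

theory Defs
  imports "HOL-Probability.Probability"
begin

definition measure_support :: "real measure \<Rightarrow> real set" where
  "measure_support M = {x. \<forall>e>0. emeasure M (ball x e) > 0}"

definition stieltjes :: "real measure \<Rightarrow> real \<Rightarrow> real" where
  "stieltjes M l = (\<integral>x. 1 / (l - x) \<partial>M)"

definition strict_convex_on :: "real set \<Rightarrow> (real \<Rightarrow> real) \<Rightarrow> bool" where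
  "strict_convex_on S f \<longleftrightarrow>
     (\<forall>x\<in>S. \<forall>y\<in>S. \<forall>t::real. x \<noteq> y \<longrightarrow> 0 < t \<longrightarrow> t < 1 \<longrightarrow>
        f ((1 - t) * x + t * y) < (1 - t) * f x + t * f y)"

end

theory Submission
  imports Defs
begin

text \<open>Write \<open>s\<close> for the Stieltjes transform and fix \<open>\<lambda> < l, m\<close>. Since
  \<open>1 / (m - x)\<close> is the geometric mean of \<open>(l - x) / (m - x)\<^sup>2\<close> and \<open>1 / (l - x)\<close>,
  Cauchy-Schwarz gives \<open>s(m)\<^sup>2 \<le> ((l - m) T(m) + s(m)) s(l)\<close> with \<open>T(m) = \<integral> (m - x)\<^sup>-\<^sup>2\<close>.
  Rearranged, this says that the graph of \<open>-1/s\<close> lies above its tangent line at \<open>m\<close>, and a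
  function lying above a line through each point of its graph is convex. Equality in
  Cauchy-Schwarz forces \<open>(l - x) / (m - x)\<close> to be constant almost everywhere, which for
  \<open>l \<noteq> m\<close> makes the measure a point mass; hence strict convexity otherwise.\<close>

lemma AE_in_measure_support:
  fixes M :: "real measure"
  assumes "sets M = sets borel"
  shows "AE x in M. x \<in> measure_support M"
proof -
  define F where "F = {ball y e | y e. 0 < e \<and> emeasure M (ball y e) = 0}"
  have cover: "- measure_support M \<subseteq> \<Union>F"
  proof
    fix y assume "y \<in> - measure_support M"
    then obtain e where "0 < e" "emeasure M (ball y e) = 0"
      unfolding measure_support_def by (auto simp: not_less)
    then show "y \<in> \<Union>F"
      unfolding F_def by (auto intro!: exI[of _ "ball y e"])
  qed
  obtain F' where F': "F' \<subseteq> F" "countable F'" "\<Union>F' = \<Union>F"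
    using Lindelof[of F] unfolding F_def by auto
  have "(\<Union>B\<in>F'. B) \<in> null_sets M"
  proof (rule null_sets_UN'[OF F'(2)])
    fix B assume "B \<in> F'"
    then obtain y e where "B = ball y e" "emeasure M (ball y e) = 0"
      using F'(1) unfolding F_def by auto
    then show "B \<in> null_sets M"
      using assms by auto
  qed
  then show ?thesis
    by (rule AE_I') (use cover F'(3) in auto)
qed

lemma measure_support_eq_singleton:
  fixes M :: "real measure"
  assumes sets: "sets M = sets borel" and nz: "emeasure M (space M) \<noteq> 0"
    and ae: "AE x in M. x = a"
  shows "measure_support M = {a}"
proof -
  have "emeasure M (ball y e) = emeasure M (space M)" if "dist y a < e" for y e
    by (rule emeasure_eq_AE) (use ae sets that in \<open>auto elim!: eventually_mono\<close>)
  moreover have "emeasure M (ball y e) = 0" if "e \<le> dist y a" for y e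
    by (subst emeasure_empty[symmetric], rule emeasure_eq_AE)
       (use ae sets that in \<open>auto elim!: eventually_mono\<close>)
  ultimately have "y \<in> measure_support M \<longleftrightarrow> y = a" for y
    unfolding measure_support_def using nz
    by (cases "y = a") (auto simp: zero_less_iff_neq_zero intro!: exI[of _ "dist y a"])
  then show ?thesis by auto
qed

lemma integral_pos_AE:
  fixes f :: "'a \<Rightarrow> real"
  assumes "integrable M f" "AE x in M. 0 < f x" "emeasure M (space M) \<noteq> 0"
  shows "0 < integral\<^sup>L M f"
proof -
  have nonneg: "AE x in M. 0 \<le> f x"
    using assms(2) by eventually_elim simp
  have "\<not> (AE x in M. f x = 0)"
  proof
    assume "AE x in M. f x = 0"
    with assms(2) have "AE x in M. False" by eventually_elim simp
    with assms(3) show False by (simp add: eventually_False ae_filter_eq_bot_iff)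
  qed
  then show ?thesis
    using integral_nonneg_AE[OF nonneg] integral_nonneg_eq_0_iff_AE[OF assms(1) nonneg]
    by linarith
qed

lemma Cauchy_Schwarz_integral_pos:
  fixes u v w :: "'a \<Rightarrow> real"
  assumes int: "integrable M u" "integrable M v" "integrable M w"
    and pos: "AE x in M. 0 < u x \<and> 0 < w x \<and> (w x)\<^sup>2 = u x * v x"
    and nz: "emeasure M (space M) \<noteq> 0"
  shows "(\<integral>x. w x \<partial>M)\<^sup>2 \<le> (\<integral>x. u x \<partial>M) * (\<integral>x. v x \<partial>M)"
    and "(\<integral>x. w x \<partial>M)\<^sup>2 = (\<integral>x. u x \<partial>M) * (\<integral>x. v x \<partial>M)
           \<Longrightarrow> \<exists>c>0. AE x in M. w x = c * u x"
proof -
  define A B S where "A = (\<integral>x. u x \<partial>M)" and "B = (\<integral>x. v x \<partial>M)" and "S = (\<integral>x. w x \<partial>M)"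
  have "0 < A" "0 < S"
    unfolding A_def S_def using pos
    by (auto intro!: integral_pos_AE int nz elim: eventually_mono)
  define c where "c = S / A"
  have "0 < c" using \<open>0 < A\<close> \<open>0 < S\<close> by (simp add: c_def)
  define g where "g x = c * u x + v x / c - 2 * w x" for x
  have g_square: "AE x in M. g x = (c * u x - w x)\<^sup>2 / (c * u x)"
    using pos
  proof eventually_elim
    case (elim x)
    then show ?case
      using \<open>0 < c\<close> by (simp add: g_def field_simps power2_eq_square)
  qed
  have g_nonneg: "AE x in M. 0 \<le> g x"
    using g_square pos by eventually_elim (use \<open>0 < c\<close> in simp)
  have "integral\<^sup>L M g = c * A + B / c - 2 * S"
    unfolding g_def A_def B_def S_def using int by simp
  also have "\<dots> = (A * B - S\<^sup>2) / S"
    using \<open>0 < A\<close> \<open>0 < S\<close> by (simp add: c_def field_simps power2_eq_square)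
  finally have integral_g: "integral\<^sup>L M g = (A * B - S\<^sup>2) / S" .
  have g_integrable: "integrable M g"
    unfolding g_def using int by simp
  show "S\<^sup>2 \<le> A * B"
    using integral_nonneg_AE[OF g_nonneg] \<open>0 < S\<close> by (simp add: integral_g zero_le_divide_iff)
  assume "S\<^sup>2 = A * B"
  then have "AE x in M. g x = 0"
    using integral_nonneg_eq_0_iff_AE[OF g_integrable g_nonneg] integral_g by simp
  with g_square pos have "AE x in M. w x = c * u x"
    by eventually_elim (use \<open>0 < c\<close> in simp)
  with \<open>0 < c\<close> show "\<exists>c>0. AE x in M. w x = c * u x" by blast
qed

lemma convex_on_supporting_lines:
  fixes f D :: "real \<Rightarrow> real"
  assumes "convex C" and support: "\<And>m l. m \<in> C \<Longrightarrow> l \<in> C \<Longrightarrow> f m + D m * (l - m) \<le> f l"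
  shows "convex_on C f"
proof (rule convex_onI[OF _ \<open>convex C\<close>])
  fix t x y :: real assume "0 < t" "t < 1" "x \<in> C" "y \<in> C"
  define m where "m = (1 - t) * x + t * y"
  have "m \<in> C"
    using convexD_alt[OF \<open>convex C\<close> \<open>x \<in> C\<close> \<open>y \<in> C\<close>, of t] \<open>0 < t\<close> \<open>t < 1\<close>
    by (simp add: m_def)
  have "f m = (1 - t) * (f m + D m * (x - m)) + t * (f m + D m * (y - m))"
    by (simp add: m_def algebra_simps)
  also have "\<dots> \<le> (1 - t) * f x + t * f y"
    using support[OF \<open>m \<in> C\<close>] \<open>x \<in> C\<close> \<open>y \<in> C\<close> \<open>0 < t\<close> \<open>t < 1\<close>
    by (intro add_mono mult_left_mono) auto
  finally show "f ((1 - t) *\<^sub>R x + t *\<^sub>R y) \<le> (1 - t) * f x + t * f y"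
    by (simp add: m_def)
qed

lemma strict_convex_on_supporting_lines:
  fixes f D :: "real \<Rightarrow> real"
  assumes "convex C"
    and support: "\<And>m l. m \<in> C \<Longrightarrow> l \<in> C \<Longrightarrow> l \<noteq> m \<Longrightarrow> f m + D m * (l - m) < f l"
  shows "strict_convex_on C f"
  unfolding strict_convex_on_def
proof (intro ballI allI impI)
  fix t x y :: real assume "x \<in> C" "y \<in> C" "x \<noteq> y" "0 < t" "t < 1"
  define m where "m = (1 - t) * x + t * y"
  have "m \<in> C"
    using convexD_alt[OF \<open>convex C\<close> \<open>x \<in> C\<close> \<open>y \<in> C\<close>, of t] \<open>0 < t\<close> \<open>t < 1\<close>
    by (simp add: m_def)
  have "x - m = t * (x - y)" "y - m = (1 - t) * (y - x)"
    by (simp_all add: m_def algebra_simps)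
  then have "x \<noteq> m" "y \<noteq> m"
    using \<open>x \<noteq> y\<close> \<open>0 < t\<close> \<open>t < 1\<close> by auto
  have "f m = (1 - t) * (f m + D m * (x - m)) + t * (f m + D m * (y - m))"
    by (simp add: m_def algebra_simps)
  also have "\<dots> < (1 - t) * f x + t * f y"
    using support[OF \<open>m \<in> C\<close>] \<open>x \<in> C\<close> \<open>y \<in> C\<close> \<open>x \<noteq> m\<close> \<open>y \<noteq> m\<close> \<open>0 < t\<close> \<open>t < 1\<close>
    by (intro add_strict_mono mult_strict_left_mono) auto
  finally show "f ((1 - t) * x + t * y) < (1 - t) * f x + t * f y"
    by (simp add: m_def)
qed

lemma integrable_inverse_power_diff:
  fixes M :: "real measure"
  assumes "finite_measure M" and [measurable_cong]: "sets M = sets borel"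
    and ae: "AE x in M. x \<le> lam" and "lam < m"
  shows "integrable M (\<lambda>x. 1 / (m - x) ^ n)"
proof (rule finite_measure.integrable_const_bound[OF \<open>finite_measure M\<close>, where B="1 / (m - lam) ^ n"])
  show "AE x in M. norm (1 / (m - x) ^ n) \<le> 1 / (m - lam) ^ n"
    using ae by eventually_elim (use \<open>lam < m\<close> in \<open>auto intro!: divide_left_mono power_mono\<close>)
qed measurable

lemma stieltjes_pos:
  fixes M :: "real measure"
  assumes "finite_measure M" and "sets M = sets borel" and nz: "emeasure M (space M) \<noteq> 0"
    and ae: "AE x in M. x \<le> lam" and "lam < l"
  shows "0 < stieltjes M l"
  unfolding stieltjes_def
  using integrable_inverse_power_diff[OF assms(1,2) ae \<open>lam < l\<close>, of 1] ae \<open>lam < l\<close>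
  by (auto intro!: integral_pos_AE nz elim: eventually_mono)

lemma stieltjes_supporting_line:
  fixes M :: "real measure"
  assumes fin: "finite_measure M" and sets [measurable_cong]: "sets M = sets borel"
    and nz: "emeasure M (space M) \<noteq> 0"
    and ae: "AE x in M. x \<le> lam" and "lam < l" "lam < m"
  \<comment> \<open>\<open>D\<close> is the derivative of \<open>l \<mapsto> - 1 / stieltjes M l\<close> at \<open>m\<close>.\<close>
  defines "D \<equiv> - (\<integral>x. 1 / (m - x)\<^sup>2 \<partial>M) / (stieltjes M m)\<^sup>2"
  shows "- 1 / stieltjes M m + D * (l - m) \<le> - 1 / stieltjes M l"
    and "l \<noteq> m \<Longrightarrow> (\<nexists>a. AE x in M. x = a) \<Longrightarrow>
           - 1 / stieltjes M m + D * (l - m) < - 1 / stieltjes M l"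
proof -
  define S T B where "S = stieltjes M m" and "T = (\<integral>x. 1 / (m - x)\<^sup>2 \<partial>M)" and "B = stieltjes M l"
  define A where "A = (l - m) * T + S"
  have int_m1: "integrable M (\<lambda>x. 1 / (m - x))"
    using integrable_inverse_power_diff[OF fin sets ae \<open>lam < m\<close>, of 1] by simp
  have int_m2: "integrable M (\<lambda>x. 1 / (m - x)\<^sup>2)"
    using integrable_inverse_power_diff[OF fin sets ae \<open>lam < m\<close>] .
  have int_l1: "integrable M (\<lambda>x. 1 / (l - x))"
    using integrable_inverse_power_diff[OF fin sets ae \<open>lam < l\<close>, of 1] by simp
  have partial_fractions: "AE x in M. (l - m) * (1 / (m - x)\<^sup>2) + 1 / (m - x) = (l - x) / (m - x)\<^sup>2"
    using ae
  proof eventually_elim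
    case (elim x)
    then have "m - x \<noteq> 0" using \<open>lam < m\<close> by simp
    then have "(l - m) * (1 / (m - x)\<^sup>2) + 1 / (m - x) = ((l - m) + (m - x)) / (m - x)\<^sup>2"
      by (simp only: add_divide_distrib power2_eq_square) simp
    then show ?case by simp
  qed
  have int_u: "integrable M (\<lambda>x. (l - x) / (m - x)\<^sup>2)"
  proof (rule integrable_cong_AE_imp[OF _ _ partial_fractions])
    show "integrable M (\<lambda>x. (l - m) * (1 / (m - x)\<^sup>2) + 1 / (m - x))"
      using int_m1 int_m2 by (intro Bochner_Integration.integrable_add integrable_mult_right)
  qed measurable
  have "(\<integral>x. (l - x) / (m - x)\<^sup>2 \<partial>M) = (\<integral>x. (l - m) * (1 / (m - x)\<^sup>2) + 1 / (m - x) \<partial>M)"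
    by (rule integral_cong_AE[OF _ _ partial_fractions, symmetric]) measurable
  also have "\<dots> = A"
    unfolding A_def T_def S_def stieltjes_def
    by (simp only: Bochner_Integration.integral_add[OF integrable_mult_right[OF int_m2] int_m1]
        integral_mult_right_zero)
  finally have int_u_eq: "(\<integral>x. (l - x) / (m - x)\<^sup>2 \<partial>M) = A" .
  have geometric_mean: "AE x in M. 0 < (l - x) / (m - x)\<^sup>2 \<and> 0 < 1 / (m - x) \<and>
      (1 / (m - x))\<^sup>2 = (l - x) / (m - x)\<^sup>2 * (1 / (l - x))"
    using ae by eventually_elim (use \<open>lam < l\<close> \<open>lam < m\<close> in \<open>auto simp: power2_eq_square\<close>)
  note Cauchy_Schwarz = Cauchy_Schwarz_integral_pos[OF int_u int_l1 int_m1 geometric_mean nz,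
      unfolded int_u_eq stieltjes_def[symmetric], folded S_def B_def]
  have "0 < S" "0 < B"
    unfolding S_def B_def using stieltjes_pos[OF fin sets nz ae] \<open>lam < l\<close> \<open>lam < m\<close> by auto
  then have line: "- 1 / S + D * (l - m) = - A / S\<^sup>2"
    and le_iff: "- A / S\<^sup>2 \<le> - 1 / B \<longleftrightarrow> S\<^sup>2 \<le> A * B"
    and less_iff: "- A / S\<^sup>2 < - 1 / B \<longleftrightarrow> S\<^sup>2 < A * B"
    by (auto simp: D_def A_def S_def T_def field_simps power2_eq_square)
  show "- 1 / stieltjes M m + D * (l - m) \<le> - 1 / stieltjes M l"
    using Cauchy_Schwarz(1) line le_iff by (simp add: S_def B_def)
  assume "l \<noteq> m" and nonatomic: "\<nexists>a. AE x in M. x = a"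
  have "S\<^sup>2 \<noteq> A * B"
  proof
    assume "S\<^sup>2 = A * B"
    then obtain c where "0 < c" and proportional: "AE x in M. 1 / (m - x) = c * ((l - x) / (m - x)\<^sup>2)"
      using Cauchy_Schwarz(2) by blast
    have "AE x in M. x = (c * l - m) / (c - 1)"
      using proportional ae
    proof eventually_elim
      case (elim x)
      then have "m - x = c * (l - x)"
        using \<open>lam < m\<close> by (simp add: power2_eq_square divide_simps)
      moreover have "c \<noteq> 1"
        using calculation \<open>l \<noteq> m\<close> by auto
      ultimately show ?case by (simp add: field_simps)
    qed
    with nonatomic show False by blast
  qed
  then show "- 1 / stieltjes M m + D * (l - m) < - 1 / stieltjes M l"
    using Cauchy_Schwarz(1) line less_iff by (simp add: S_def B_def)
qed

theorem lemma3p2: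
  fixes M :: "real measure" and lam :: real
  assumes "sets M = sets borel"
    and "finite_measure M"
    and "emeasure M (space M) \<noteq> 0"
    and "measure_support M \<subseteq> {..lam}"
  shows "convex_on {lam<..} (\<lambda>l. - 1 / stieltjes M l) \<and>
         ((\<nexists>a. measure_support M = {a}) \<longrightarrow>
           strict_convex_on {lam<..} (\<lambda>l. - 1 / stieltjes M l))"
proof (intro conjI impI)
  have ae: "AE x in M. x \<le> lam"
    using AE_in_measure_support[OF assms(1)] assms(4) by (auto elim: eventually_mono)
  note supporting_line = stieltjes_supporting_line[OF assms(2,1,3) ae]
  let ?slope = "\<lambda>m. - (\<integral>x. 1 / (m - x)\<^sup>2 \<partial>M) / (stieltjes M m)\<^sup>2"
  show "convex_on {lam<..} (\<lambda>l. - 1 / stieltjes M l)"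
    by (rule convex_on_supporting_lines[where D = ?slope]) (use supporting_line(1) in auto)
  assume "\<nexists>a. measure_support M = {a}"
  then have nonatomic: "\<nexists>a. AE x in M. x = a"
    using measure_support_eq_singleton[OF assms(1,3)] by blast
  show "strict_convex_on {lam<..} (\<lambda>l. - 1 / stieltjes M l)"
    by (rule strict_convex_on_supporting_lines[where D = ?slope])
       (use supporting_line(2) nonatomic in auto)
qed

end
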